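(* Let $d>1$ and let $C\subseteq\{0,1\}^n$ be a maximum class of VC-dimension $d$. Then for every set $I\subseteq[n]$ of $d-1$ colors, the boundary $\partial C$ contains at least two $(d-1)$-cubes whose set of colors is $I$.
   Context: $C\subseteq\{0,1\}^n$ is maximum of VC-dimension $d$ if its VC-dimension is $d$ and $|C|=\sum_{i=0}^d\binom{n}{i}$. A $k$-cube in $C$ with colors $I$ ($|I|=k$) is a set of $2^k$ points of $C$ that agree outside the coordinates $I$ and take all $2^k$ values on $I$. The boundary $\partial C$ of a $d$-maximum class $C$ is the set of all $(d-1)$-cubes in $C$ that are faces of exactly one $d$-cube in $C$. *)

theory Defs
  imports Main
begin

text \<open>Points of {0,1}^n are represented as subsets of {..<n} (coordinate i is 1 iff i is in the set).
  A class C is a set of such points.\<close>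

definition shatters :: "nat set set \<Rightarrow> nat set \<Rightarrow> bool" where
  "shatters C S \<longleftrightarrow> (\<lambda>c. c \<inter> S) ` C = Pow S"

definition vc_dim_eq :: "nat \<Rightarrow> nat set set \<Rightarrow> nat \<Rightarrow> bool" where
  "vc_dim_eq n C d \<longleftrightarrow>
     (\<exists>S. S \<subseteq> {..<n} \<and> card S = d \<and> shatters C S) \<and>
     (\<forall>S. S \<subseteq> {..<n} \<longrightarrow> shatters C S \<longrightarrow> card S \<le> d)"

definition maximum_class :: "nat \<Rightarrow> nat \<Rightarrow> nat set set \<Rightarrow> bool" where
  "maximum_class n d C \<longleftrightarrow> C \<subseteq> Pow {..<n} \<and> vc_dim_eq n C d \<and>
     card C = (\<Sum>i\<le>d. n choose i)"

definition cube_in :: "nat \<Rightarrow> nat set set \<Rightarrow> nat set \<Rightarrow> nat set set \<Rightarrow> bool" where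
  "cube_in n C I Q \<longleftrightarrow> I \<subseteq> {..<n} \<and> Q \<subseteq> C \<and>
     (\<exists>x. x \<subseteq> {..<n} - I \<and> Q = {x \<union> J | J. J \<subseteq> I})"

definition boundary :: "nat \<Rightarrow> nat \<Rightarrow> nat set set \<Rightarrow> (nat set \<times> nat set set) set" where
  "boundary n d C = {(I, Q). cube_in n C I Q \<and> card I = d - 1 \<and>
     card {Q'. \<exists>I'. cube_in n C I' Q' \<and> card I' = d \<and> I \<subseteq> I' \<and> Q \<subseteq> Q'} = 1}"

end

theory Submission
  imports Defs
begin

text \<open>By the Sauer--Shelah bound and a counting argument, the reduction of a maximum class
  at any coordinate is again maximum; iterating, a d-maximum class contains a cube on every
  set of at most d colors. Fix I with d - 1 colors and consider the points x outside I that
  carry an I-cube in C, joined along coordinate j when both x and x with j flipped do. Two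
  edges in the same direction would let C shatter a set of d + 1 colors, so this graph has
  at most one edge per direction; hence every component containing an edge has at least two
  leaves. The d-cubes above the I-cube at x correspond to the edges at x, so leaves give
  boundary cubes, and the d-cube on I plus one more color provides an edge.\<close>

section \<open>Reductions of maximum classes\<close>

lemma shatters_iff: "shatters C S \<longleftrightarrow> (\<forall>T\<subseteq>S. \<exists>c\<in>C. c \<inter> S = T)"
  unfolding shatters_def
proof
  assume "(\<lambda>c. c \<inter> S) ` C = Pow S"
  then have "T \<in> (\<lambda>c. c \<inter> S) ` C" if "T \<subseteq> S" for T using that by simp
  then show "\<forall>T\<subseteq>S. \<exists>c\<in>C. c \<inter> S = T" by blast
next
  assume "\<forall>T\<subseteq>S. \<exists>c\<in>C. c \<inter> S = T"
  then show "(\<lambda>c. c \<inter> S) ` C = Pow S" by (auto simp: image_iff)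
qed

definition vc_dim_le :: "nat set \<Rightarrow> nat set set \<Rightarrow> nat \<Rightarrow> bool" where
  "vc_dim_le U C d \<longleftrightarrow> (\<forall>S\<subseteq>U. shatters C S \<longrightarrow> card S \<le> d)"

definition maximum_on :: "nat set \<Rightarrow> nat \<Rightarrow> nat set set \<Rightarrow> bool" where
  "maximum_on U d C \<longleftrightarrow> finite U \<and> C \<subseteq> Pow U \<and> vc_dim_le U C d \<and>
     card C = (\<Sum>i\<le>d. card U choose i)"

definition deletion :: "nat \<Rightarrow> nat set set \<Rightarrow> nat set set" where
  "deletion j C = (\<lambda>c. c - {j}) ` C"

definition reduction :: "nat \<Rightarrow> nat set set \<Rightarrow> nat set set" where
  "reduction j C = {c \<in> C. j \<notin> c \<and> insert j c \<in> C}"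

lemma sum_atMost_choose_Suc:
  "(\<Sum>i\<le>Suc d. Suc k choose i) = (\<Sum>i\<le>Suc d. k choose i) + (\<Sum>i\<le>d. k choose i)"
proof -
  have "(\<Sum>i\<le>Suc d. Suc k choose i) = 1 + (\<Sum>i\<le>d. k choose i) + (\<Sum>i\<le>d. k choose Suc i)"
    by (subst sum.atMost_Suc_shift) (simp add: sum.distrib)
  moreover have "(\<Sum>i\<le>Suc d. k choose i) = 1 + (\<Sum>i\<le>d. k choose Suc i)"
    by (subst sum.atMost_Suc_shift) simp
  ultimately show ?thesis by simp
qed

lemma shatters_of_shatters_deletion:
  assumes "j \<notin> S" "shatters (deletion j C) S"
  shows "shatters C S"
proof -
  have "(\<lambda>c. c \<inter> S) ` deletion j C = (\<lambda>c. c \<inter> S) ` C"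
    unfolding deletion_def image_image using assms(1) by (intro image_cong) auto
  with assms(2) show ?thesis unfolding shatters_def by simp
qed

lemma shatters_insert_of_shatters_reduction:
  assumes "j \<notin> S" "shatters (reduction j C) S"
  shows "shatters C (insert j S)"
  unfolding shatters_iff
proof (intro allI impI)
  fix T assume T: "T \<subseteq> insert j S"
  then obtain c where c: "c \<in> reduction j C" "c \<inter> S = T - {j}"
    using assms(2) unfolding shatters_iff by (metis Diff_subset_conv insert_is_Un)
  show "\<exists>c\<in>C. c \<inter> insert j S = T"
  proof (cases "j \<in> T")
    case True
    then show ?thesis
      using c by (intro bexI[of _ "insert j c"]) (auto simp: reduction_def)
  next
    case False
    then show ?thesis
      using c by (intro bexI[of _ c]) (auto simp: reduction_def)
  qed
qed

lemma card_deletion_add_card_reduction: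
  assumes "finite C"
  shows "card (deletion j C) + card (reduction j C) = card C"
proof -
  define C0 where "C0 = {c \<in> C. j \<notin> c}"
  define C1 where "C1 = {c \<in> C. j \<in> c}"
  let ?f = "\<lambda>c. c - {j}"
  have fin: "finite C0" "finite C1" using assms by (auto simp: C0_def C1_def)
  have "C = C0 \<union> C1" "C0 \<inter> C1 = {}" by (auto simp: C0_def C1_def)
  then have card_C: "card C = card C0 + card C1" using fin card_Un_disjoint by metis
  have "inj_on ?f C1"
    unfolding inj_on_def C1_def by (metis insert_Diff mem_Collect_eq)
  then have card_C1: "card (?f ` C1) = card C1" by (rule card_image)
  have "?f ` C0 = C0" by (force simp: C0_def)
  then have deletion: "deletion j C = C0 \<union> ?f ` C1"
    unfolding deletion_def using \<open>C = C0 \<union> C1\<close> by (metis image_Un)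
  have reduction: "reduction j C = C0 \<inter> ?f ` C1"
    unfolding C0_def C1_def reduction_def by (auto simp: insert_absorb image_iff)
  have "card (C0 \<union> ?f ` C1) + card (C0 \<inter> ?f ` C1) = card C0 + card (?f ` C1)"
    using fin by (intro card_Un_Int [symmetric]) auto
  then show ?thesis using card_C card_C1 deletion reduction by simp
qed

lemma vc_dim_le_deletion:
  assumes "j \<notin> U" "vc_dim_le (insert j U) C d"
  shows "vc_dim_le U (deletion j C) d"
  unfolding vc_dim_le_def
proof (intro allI impI)
  fix S assume S: "S \<subseteq> U" "shatters (deletion j C) S"
  with assms(1) have "shatters C S" using shatters_of_shatters_deletion by blast
  with S(1) assms(2) show "card S \<le> d" unfolding vc_dim_le_def by blast
qed

lemma vc_dim_le_reduction:
  assumes "finite U" "j \<notin> U" "vc_dim_le (insert j U) C d"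
  shows "vc_dim_le U (reduction j C) (d - 1)"
  unfolding vc_dim_le_def
proof (intro allI impI)
  fix S assume S: "S \<subseteq> U" "shatters (reduction j C) S"
  with assms(2) have "j \<notin> S" by auto
  then have "shatters C (insert j S)" using S(2) by (rule shatters_insert_of_shatters_reduction)
  with S(1) assms(3) have "card (insert j S) \<le> d" unfolding vc_dim_le_def by blast
  with \<open>j \<notin> S\<close> finite_subset[OF S(1) assms(1)] show "card S \<le> d - 1" by simp
qed

lemma sauer_shelah:
  assumes "finite U" "C \<subseteq> Pow U" "vc_dim_le U C d"
  shows "card C \<le> (\<Sum>i\<le>d. card U choose i)"
  using assms
proof (induction U arbitrary: C d rule: finite_induct)
  case empty
  then have "card C \<le> card {{}::nat set}" by (intro card_mono) auto
  moreover have "(\<Sum>i\<le>d. 0 choose i) = 1" by (induction d) auto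
  ultimately show ?case by simp
next
  case (insert j U)
  have finite_C: "finite C" using insert.hyps(1) insert.prems(1) finite_subset by blast
  have deletion: "card (deletion j C) \<le> (\<Sum>i\<le>d. card U choose i)"
    using insert.IH[of "deletion j C"] insert.prems vc_dim_le_deletion[OF insert.hyps(2)]
    unfolding deletion_def by blast
  show ?case
  proof (cases d)
    case 0
    have "reduction j C = {}"
    proof (rule ccontr)
      assume "reduction j C \<noteq> {}"
      then have "shatters C {j}"
        using shatters_insert_of_shatters_reduction[of j "{}"] by (auto simp: shatters_def)
      with insert.prems(2) have "card {j} \<le> d" unfolding vc_dim_le_def by blast
      with 0 show False by simp
    qed
    then show ?thesis
      using deletion card_deletion_add_card_reduction[OF finite_C, of j] 0 insert.hyps by simp
  next
    case (Suc d')
    have reduction: "card (reduction j C) \<le> (\<Sum>i\<le>d'. card U choose i)"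
      using insert.IH[of "reduction j C" d'] vc_dim_le_reduction[OF insert.hyps insert.prems(2)]
        insert.prems(1) Suc unfolding reduction_def by auto
    have "card C = card (deletion j C) + card (reduction j C)"
      using card_deletion_add_card_reduction[OF finite_C] by simp
    also have "\<dots> \<le> (\<Sum>i\<le>Suc d'. card U choose i) + (\<Sum>i\<le>d'. card U choose i)"
      using deletion reduction unfolding Suc by (rule add_mono)
    also have "\<dots> = (\<Sum>i\<le>d. card (insert j U) choose i)"
      unfolding Suc card_insert_disjoint[OF insert.hyps] by (rule sum_atMost_choose_Suc [symmetric])
    finally show ?thesis .
  qed
qed

text \<open>Both Sauer--Shelah bounds, for the deletion and for the reduction, must be tight.\<close>

lemma maximum_on_reduction:
  assumes "maximum_on (insert j U) d C" "j \<notin> U" "d \<ge> 1"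
  shows "maximum_on U (d - 1) (reduction j C)"
proof -
  have U: "finite U" and C: "C \<subseteq> Pow (insert j U)" and vc: "vc_dim_le (insert j U) C d"
    and card_C: "card C = (\<Sum>i\<le>d. card (insert j U) choose i)"
    using assms(1) unfolding maximum_on_def by auto
  obtain d' where d: "d = Suc d'" using assms(3) by (cases d) auto
  have reduction_sub: "reduction j C \<subseteq> Pow U" using C by (auto simp: reduction_def)
  have vc_reduction: "vc_dim_le U (reduction j C) d'"
    using vc_dim_le_reduction[OF U assms(2) vc] d by simp
  have "card (deletion j C) \<le> (\<Sum>i\<le>d. card U choose i)"
    using sauer_shelah[OF U _ vc_dim_le_deletion[OF assms(2) vc]] C
    by (auto simp: deletion_def)
  moreover have "card (reduction j C) \<le> (\<Sum>i\<le>d'. card U choose i)"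
    using sauer_shelah[OF U reduction_sub vc_reduction] .
  moreover have "card C = card (deletion j C) + card (reduction j C)"
    using card_deletion_add_card_reduction[OF finite_subset[OF C]] U by simp
  moreover have "card C = (\<Sum>i\<le>d. card U choose i) + (\<Sum>i\<le>d'. card U choose i)"
    using card_C unfolding card_insert_disjoint[OF U assms(2)] d by (rule trans) (rule sum_atMost_choose_Suc)
  ultimately have "card (reduction j C) = (\<Sum>i\<le>d'. card U choose i)" by linarith
  then show ?thesis
    using U reduction_sub vc_reduction d unfolding maximum_on_def by simp
qed

section \<open>Cubes in maximum classes\<close>

definition cube :: "nat set \<Rightarrow> nat set \<Rightarrow> nat set set" where
  "cube x I = {x \<union> J | J. J \<subseteq> I}"

lemma cube_in_iff_cube:
  "cube_in n C I Q \<longleftrightarrow> I \<subseteq> {..<n} \<and> Q \<subseteq> C \<and> (\<exists>x. x \<subseteq> {..<n} - I \<and> Q = cube x I)"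
  unfolding cube_in_def cube_def ..

lemma union_in_cube: "J \<subseteq> I \<Longrightarrow> x \<union> J \<in> cube x I"
  unfolding cube_def by blast

lemma base_in_cube: "x \<in> cube x I"
  using union_in_cube[of "{}" I x] by simp

lemma cube_insert: "cube x (insert j I) = cube x I \<union> cube (insert j x) I"
proof (intro equalityI subsetI)
  fix y assume "y \<in> cube x (insert j I)"
  then obtain J where J: "y = x \<union> J" "J \<subseteq> insert j I" unfolding cube_def by blast
  show "y \<in> cube x I \<union> cube (insert j x) I"
  proof (cases "j \<in> J")
    case True
    then have "y = insert j x \<union> (J - {j})" "J - {j} \<subseteq> I" using J by auto
    then show ?thesis unfolding cube_def by blast
  next
    case False
    then show ?thesis using J unfolding cube_def by blast
  qed
next
  fix y assume "y \<in> cube x I \<union> cube (insert j x) I"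
  then obtain J where "J \<subseteq> I" "y = x \<union> J \<or> y = x \<union> insert j J" unfolding cube_def by auto
  then show "y \<in> cube x (insert j I)" unfolding cube_def by blast
qed

lemma cube_inject:
  assumes "cube x I = cube y I"
  shows "x = y"
proof -
  have "x \<in> cube y I" "y \<in> cube x I" using base_in_cube[of x I] base_in_cube[of y I] assms by simp_all
  then obtain J J' where "x = y \<union> J" "y = x \<union> J'" unfolding cube_def by blast
  then show ?thesis by blast
qed

lemma cube_insert_subset_of_cube_subset_reduction:
  assumes "cube x S \<subseteq> reduction j C"
  shows "cube x (insert j S) \<subseteq> C"
  unfolding cube_insert
proof
  fix y assume "y \<in> cube x S \<union> cube (insert j x) S"
  then consider "y \<in> cube x S" | J where "J \<subseteq> S" "y = insert j (x \<union> J)"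
    unfolding cube_def by auto
  then show "y \<in> C"
  proof cases
    case 1
    with assms show ?thesis by (auto simp: reduction_def)
  next
    case 2
    then have "x \<union> J \<in> reduction j C" using assms unfolding cube_def by blast
    with 2 show ?thesis by (simp add: reduction_def)
  qed
qed

lemma maximum_on_cube_subset:
  assumes "maximum_on U d C" "S \<subseteq> U" "card S \<le> d"
  shows "\<exists>x. x \<subseteq> U - S \<and> cube x S \<subseteq> C"
proof -
  have "finite U" using assms(1) by (simp add: maximum_on_def)
  with assms(2) have "finite S" by (rule finite_subset)
  then show ?thesis
    using assms
  proof (induction S arbitrary: U d C rule: finite_induct)
    case empty
    have "card U choose 0 \<le> (\<Sum>i\<le>d. card U choose i)" by (rule member_le_sum) auto
    then have "C \<noteq> {}" using empty.prems(1) unfolding maximum_on_def by auto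
    then obtain x where "x \<in> C" by blast
    moreover have "cube x {} = {x}" by (simp add: cube_def)
    ultimately show ?case using empty.prems(1) unfolding maximum_on_def by (intro exI[of _ x]) auto
  next
    case (insert j S)
    define U' where "U' = U - {j}"
    have U': "U = insert j U'" "j \<notin> U'" "S \<subseteq> U'"
      using insert.prems(2) insert.hyps(2) by (auto simp: U'_def)
    have card_S: "card S \<le> d - 1" and "d \<ge> 1" using insert.prems(3) insert.hyps by simp_all
    then have "maximum_on U' (d - 1) (reduction j C)"
      using maximum_on_reduction[of j U' d C] insert.prems(1) U' by simp
    then have "\<exists>x. x \<subseteq> U' - S \<and> cube x S \<subseteq> reduction j C"
      using U'(3) card_S by (rule insert.IH)
    then obtain x where x: "x \<subseteq> U' - S" "cube x S \<subseteq> reduction j C" by blast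
    from x(2) have "cube x (insert j S) \<subseteq> C" by (rule cube_insert_subset_of_cube_subset_reduction)
    moreover have "x \<subseteq> U - insert j S" using x(1) by (auto simp: U'_def)
    ultimately show ?case by blast
  qed
qed


section \<open>Subgraphs of the hypercube with one edge per direction\<close>

definition edge_dirs :: "nat set \<Rightarrow> nat set set \<Rightarrow> nat set \<Rightarrow> nat set" where
  "edge_dirs R D x = {j \<in> R. x - {j} \<in> D \<and> insert j x \<in> D}"

definition one_edge_per_dir :: "nat set \<Rightarrow> nat set set \<Rightarrow> bool" where
  "one_edge_per_dir R D \<longleftrightarrow> (\<forall>j\<in>R. \<forall>y z. y \<in> D \<longrightarrow> z \<in> D \<longrightarrow> j \<notin> y \<longrightarrow> j \<notin> z \<longrightarrow>
      insert j y \<in> D \<longrightarrow> insert j z \<in> D \<longrightarrow> y = z)"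

lemma mem_of_edge_dir: "j \<in> edge_dirs R D x \<Longrightarrow> x \<in> D"
  unfolding edge_dirs_def by (cases "j \<in> x") (auto simp: insert_absorb)

lemma one_edge_per_dir_subset:
  assumes "one_edge_per_dir R D" "D' \<subseteq> D"
  shows "one_edge_per_dir R D'"
  using assms unfolding one_edge_per_dir_def by (meson subsetD)

lemma eq_of_edge_dir_same_side:
  assumes "one_edge_per_dir R D" "a \<in> edge_dirs R D w" "a \<in> edge_dirs R D u" "a \<in> w \<longleftrightarrow> a \<in> u"
  shows "w = u"
proof -
  have "a \<in> R" "w - {a} \<in> D" "u - {a} \<in> D" "insert a (w - {a}) \<in> D" "insert a (u - {a}) \<in> D"
    using assms(2,3) unfolding edge_dirs_def by auto
  then have "w - {a} = u - {a}"
    using assms(1) unfolding one_edge_per_dir_def by blast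
  with assms(4) show ?thesis by blast
qed

lemma edge_dirs_half:
  assumes "a \<in> x \<longleftrightarrow> a \<in> u"
  shows "edge_dirs R {y \<in> D. a \<in> y \<longleftrightarrow> a \<in> u} x = edge_dirs R D x - {a}"
proof (rule set_eqI)
  fix j show "j \<in> edge_dirs R {y \<in> D. a \<in> y \<longleftrightarrow> a \<in> u} x \<longleftrightarrow> j \<in> edge_dirs R D x - {a}"
  proof (cases "j = a")
    case True
    then show ?thesis using assms unfolding edge_dirs_def by auto
  next
    case False
    then have "a \<in> x - {j} \<longleftrightarrow> a \<in> x" "a \<in> insert j x \<longleftrightarrow> a \<in> x" by auto
    then show ?thesis using assms False unfolding edge_dirs_def by auto
  qed
qed

text \<open>Walk along an edge from v to u; if u is not a leaf, recurse into the half of D on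
  the side of u, where the direction of that edge is no longer available.\<close>

lemma exists_other_leaf:
  assumes "finite D" "one_edge_per_dir R D" "edge_dirs R D v \<noteq> {}"
  shows "\<exists>w\<in>D. w \<noteq> v \<and> card (edge_dirs R D w) = 1"
  using assms
proof (induction "card D" arbitrary: D v rule: less_induct)
  case less
  obtain a where a: "a \<in> edge_dirs R D v" using less.prems(3) by blast
  define u where "u = (if a \<in> v then v - {a} else insert a v)"
  have "v \<in> D" using a by (rule mem_of_edge_dir)
  have au: "a \<in> edge_dirs R D u"
    using a \<open>v \<in> D\<close> unfolding u_def edge_dirs_def by (auto simp: insert_absorb)
  have "u \<in> D" using au by (rule mem_of_edge_dir)
  have uv: "u \<noteq> v" "a \<in> u \<longleftrightarrow> a \<notin> v" unfolding u_def by auto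
  show ?case
  proof (cases "card (edge_dirs R D u) = 1")
    case True
    with \<open>u \<in> D\<close> uv show ?thesis by blast
  next
    case False
    define D' where "D' = {x \<in> D. a \<in> x \<longleftrightarrow> a \<in> u}"
    have D'_dirs: "edge_dirs R D' x = edge_dirs R D x - {a}" if "x \<in> D'" for x
      using that edge_dirs_half[of a x u R D] unfolding D'_def by simp
    have "u \<in> D'" "v \<notin> D'" using \<open>u \<in> D\<close> uv unfolding D'_def by auto
    then have "D' \<subset> D" using \<open>v \<in> D\<close> unfolding D'_def by auto
    have "edge_dirs R D u \<noteq> {a}" using False by auto
    then have "edge_dirs R D' u \<noteq> {}" using au D'_dirs[OF \<open>u \<in> D'\<close>] by blast
    moreover have "card D' < card D" "finite D'"
      using \<open>D' \<subset> D\<close> less.prems(1) psubset_card_mono finite_subset by auto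
    moreover have "one_edge_per_dir R D'"
      using less.prems(2) \<open>D' \<subset> D\<close> by (auto intro: one_edge_per_dir_subset)
    ultimately obtain w where w: "w \<in> D'" "w \<noteq> u" "card (edge_dirs R D' w) = 1"
      using less.hyps[of D' u] by blast
    have "a \<notin> edge_dirs R D w"
    proof
      assume "a \<in> edge_dirs R D w"
      moreover have "a \<in> w \<longleftrightarrow> a \<in> u" using w(1) D'_def by auto
      ultimately have "w = u" using eq_of_edge_dir_same_side[OF less.prems(2) _ au] by blast
      with w(2) show False ..
    qed
    then have "edge_dirs R D w = edge_dirs R D' w" using D'_dirs[OF w(1)] by auto
    moreover have "w \<noteq> v" "w \<in> D" using w(1) \<open>v \<notin> D'\<close> \<open>D' \<subset> D\<close> by auto
    ultimately show ?thesis using w(3) by auto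
  qed
qed


section \<open>The graph of I-cubes and the boundary\<close>

definition cube_anchors :: "nat set \<Rightarrow> nat set set \<Rightarrow> nat set \<Rightarrow> nat set set" where
  "cube_anchors U C I = {x. x \<subseteq> U - I \<and> cube x I \<subseteq> C}"

lemma finite_cube_anchors: "finite U \<Longrightarrow> finite (cube_anchors U C I)"
  unfolding cube_anchors_def by (rule finite_subset[of _ "Pow U"]) auto

lemma edge_dir_cube_anchors_iff:
  assumes "j \<in> U - I" "w \<subseteq> U - I"
  shows "j \<in> edge_dirs (U - I) (cube_anchors U C I) w \<longleftrightarrow> cube (w - {j}) (insert j I) \<subseteq> C"
proof -
  have "cube (w - {j}) (insert j I) = cube (w - {j}) I \<union> cube (insert j w) I"
    by (simp add: cube_insert)
  moreover have "w - {j} \<subseteq> U - I" "insert j w \<subseteq> U - I" using assms by auto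
  ultimately show ?thesis using assms(1) unfolding edge_dirs_def cube_anchors_def by auto
qed

lemma shatters_of_parallel_anchor_edges:
  assumes y: "y1 \<in> cube_anchors U C I" "y2 \<in> cube_anchors U C I"
      "insert j y1 \<in> cube_anchors U C I" "insert j y2 \<in> cube_anchors U C I" "j \<notin> y1" "j \<notin> y2"
    and k: "k \<in> y1" "k \<notin> y2"
  shows "shatters C (insert j (insert k I))"
  unfolding shatters_iff
proof (intro allI impI)
  fix T assume T: "T \<subseteq> insert j (insert k I)"
  define b where "b = (if k \<in> T then y1 else y2)"
  define b' where "b' = (if j \<in> T then insert j b else b)"
  have "b' \<in> cube_anchors U C I" unfolding b'_def b_def using y by auto
  then have b': "b' \<inter> I = {}" "cube b' I \<subseteq> C" unfolding cube_anchors_def by auto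
  have "j \<in> b' \<longleftrightarrow> j \<in> T" "k \<in> b' \<longleftrightarrow> k \<in> T"
    unfolding b'_def b_def using y(5,6) k by auto
  with b'(1) T have "(b' \<union> (T \<inter> I)) \<inter> insert j (insert k I) = T" by auto
  moreover have "b' \<union> (T \<inter> I) \<in> C" using b'(2) union_in_cube[of "T \<inter> I" I b'] by blast
  ultimately show "\<exists>c\<in>C. c \<inter> insert j (insert k I) = T" by (rule bexI)
qed

lemma one_edge_per_dir_cube_anchors:
  assumes "finite U" "I \<subseteq> U" "vc_dim_le U C (Suc (card I))"
  shows "one_edge_per_dir (U - I) (cube_anchors U C I)"
proof -
  let ?A = "cube_anchors U C I"
  have no_parallel: False if "j \<in> U - I" "y1 \<in> ?A" "y2 \<in> ?A" "insert j y1 \<in> ?A"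
    "insert j y2 \<in> ?A" "j \<notin> y1" "j \<notin> y2" "k \<in> y1" "k \<notin> y2" for j k y1 y2
  proof -
    let ?S = "insert j (insert k I)"
    have "k \<in> U - I" "k \<noteq> j" using that unfolding cube_anchors_def by auto
    have "shatters C ?S" using shatters_of_parallel_anchor_edges[OF that(2-)] .
    moreover have "?S \<subseteq> U" using that(1) \<open>k \<in> U - I\<close> assms(2) by auto
    ultimately have "card ?S \<le> Suc (card I)" using assms(3) unfolding vc_dim_le_def by blast
    moreover have "finite I" using assms(2,1) by (rule finite_subset)
    ultimately show False using that(1) \<open>k \<in> U - I\<close> \<open>k \<noteq> j\<close> by simp
  qed
  show ?thesis unfolding one_edge_per_dir_def
  proof (intro ballI allI impI)
    fix j y z assume edges: "j \<in> U - I" "y \<in> ?A" "z \<in> ?A" "j \<notin> y" "j \<notin> z"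
      "insert j y \<in> ?A" "insert j z \<in> ?A"
    show "y = z"
    proof (rule ccontr)
      assume "y \<noteq> z"
      then obtain k where "k \<in> y \<and> k \<notin> z \<or> k \<in> z \<and> k \<notin> y" by blast
      then show False using no_parallel[of j y z k] no_parallel[of j z y k] edges by blast
    qed
  qed
qed

lemma exists_cube_anchor_edge:
  assumes "maximum_on U d C" "I \<subseteq> U" "card I < d" "j \<in> U - I"
  shows "\<exists>x. j \<in> edge_dirs (U - I) (cube_anchors U C I) x"
proof -
  have "finite U" using assms(1) by (simp add: maximum_on_def)
  with assms(2) have "finite I" by (rule finite_subset)
  then have "card (insert j I) \<le> d" using assms(3) by (simp add: card_insert_if)
  with assms(1) have "\<exists>x. x \<subseteq> U - insert j I \<and> cube x (insert j I) \<subseteq> C"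
    using assms(2,4) by (intro maximum_on_cube_subset) auto
  then obtain x where x: "x \<subseteq> U - insert j I" "cube x (insert j I) \<subseteq> C" by blast
  then have "x - {j} = x" "x \<subseteq> U - I" by auto
  with x(2) have "j \<in> edge_dirs (U - I) (cube_anchors U C I) x"
    using edge_dir_cube_anchors_iff[OF assms(4)] by simp
  then show ?thesis ..
qed

lemma supercubes_of_cube_anchor:
  assumes "I \<subseteq> {..<n}" "w \<in> cube_anchors {..<n} C I"
  shows "{Q'. \<exists>I'. cube_in n C I' Q' \<and> card I' = Suc (card I) \<and> I \<subseteq> I' \<and> cube w I \<subseteq> Q'} =
    (\<lambda>j. cube (w - {j}) (insert j I)) ` edge_dirs ({..<n} - I) (cube_anchors {..<n} C I) w"
    (is "?L = ?cube ` ?E")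
proof -
  have w: "w \<subseteq> {..<n} - I" "cube w I \<subseteq> C" using assms(2) unfolding cube_anchors_def by auto
  have "finite I" using assms(1) by (rule finite_subset) simp
  show ?thesis
  proof (intro equalityI subsetI)
    fix Q' assume "Q' \<in> ?L"
    then obtain I' y where I': "I' \<subseteq> {..<n}" "Q' \<subseteq> C" "y \<subseteq> {..<n} - I'" "Q' = cube y I'"
      "card I' = Suc (card I)" "I \<subseteq> I'" "cube w I \<subseteq> Q'"
      unfolding cube_in_iff_cube by blast
    have "card (I' - I) = 1" using card_Diff_subset[OF \<open>finite I\<close> I'(6)] I'(5) by simp
    then obtain j where "I' - I = {j}" by (rule card_1_singletonE)
    then have I'_eq: "I' = insert j I" and j: "j \<in> {..<n} - I" using I'(1,6) by auto
    have "w \<in> cube y I'" using I'(4,7) base_in_cube[of w I] by blast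
    then obtain J where "w = y \<union> J" "J \<subseteq> I'" unfolding cube_def by blast
    then have "y = w - {j}" using I'(3) w(1) I'_eq by blast
    then have "Q' = ?cube j" "?cube j \<subseteq> C" using I'(2,4) I'_eq by simp_all
    moreover have "j \<in> ?E" using edge_dir_cube_anchors_iff[OF j w(1)] \<open>?cube j \<subseteq> C\<close> by simp
    ultimately show "Q' \<in> ?cube ` ?E" by blast
  next
    fix Q' assume "Q' \<in> ?cube ` ?E"
    then obtain j where j: "j \<in> ?E" "Q' = ?cube j" by blast
    then have jR: "j \<in> {..<n} - I" unfolding edge_dirs_def by simp
    have "?cube j \<subseteq> C" using edge_dir_cube_anchors_iff[OF jR w(1)] j(1) by simp
    then have cube_in: "cube_in n C (insert j I) (?cube j)"
      unfolding cube_in_iff_cube using assms(1) jR w(1) by (intro conjI exI[of _ "w - {j}"]) auto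
    have card: "card (insert j I) = Suc (card I)" using jR \<open>finite I\<close> by simp
    have "cube w I \<subseteq> cube (w - {j}) I \<union> cube (insert j w) I"
      by (cases "j \<in> w") (simp_all add: insert_absorb)
    then have "cube w I \<subseteq> ?cube j" by (simp add: cube_insert)
    with cube_in card have "?cube j \<in> ?L" by blast
    then show "Q' \<in> ?L" using j(2) by simp
  qed
qed

lemma boundary_of_cube_anchor_leaf:
  assumes "d = Suc (card I)" "I \<subseteq> {..<n}" "w \<in> cube_anchors {..<n} C I"
    and "card (edge_dirs ({..<n} - I) (cube_anchors {..<n} C I) w) = 1"
  shows "(I, cube w I) \<in> boundary n d C"
proof -
  obtain j where "edge_dirs ({..<n} - I) (cube_anchors {..<n} C I) w = {j}"
    using assms(4) by (rule card_1_singletonE)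
  then have "card {Q'. \<exists>I'. cube_in n C I' Q' \<and> card I' = d \<and> I \<subseteq> I' \<and> cube w I \<subseteq> Q'} = 1"
    using supercubes_of_cube_anchor[OF assms(2,3)] assms(1) by simp
  moreover have "cube_in n C I (cube w I)"
    using assms(2,3) unfolding cube_in_iff_cube cube_anchors_def by auto
  ultimately show ?thesis unfolding boundary_def using assms(1) by simp
qed

lemma maximum_on_if_maximum_class: "maximum_class n d C \<Longrightarrow> maximum_on {..<n} d C"
  unfolding maximum_class_def maximum_on_def vc_dim_eq_def vc_dim_le_def by simp

lemma dim_le_if_maximum_class:
  assumes "maximum_class n d C"
  shows "d \<le> n"
proof -
  obtain S where "S \<subseteq> {..<n}" "card S = d"
    using assms unfolding maximum_class_def vc_dim_eq_def by blast
  then show ?thesis using card_mono[of "{..<n}" S] by simp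
qed

theorem theorem2:
  fixes n d :: nat and C :: "nat set set"
  assumes "d > 1" and "maximum_class n d C"
  shows "\<forall>I. I \<subseteq> {..<n} \<and> card I = d - 1 \<longrightarrow>
           (\<exists>Q1 Q2. Q1 \<noteq> Q2 \<and> (I, Q1) \<in> boundary n d C \<and> (I, Q2) \<in> boundary n d C)"
proof (intro allI impI)
  fix I assume "I \<subseteq> {..<n} \<and> card I = d - 1"
  then have I: "I \<subseteq> {..<n}" and d: "d = Suc (card I)" using assms(1) by auto
  let ?R = "{..<n} - I" and ?A = "cube_anchors {..<n} C I"
  have max: "maximum_on {..<n} d C" using assms(2) by (rule maximum_on_if_maximum_class)
  have "\<not> {..<n} \<subseteq> I"
    using card_mono[of I "{..<n}"] I d dim_le_if_maximum_class[OF assms(2)] finite_subset by fastforce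
  then obtain j where "j \<in> ?R" by blast
  with max I d obtain v where "j \<in> edge_dirs ?R ?A v" using exists_cube_anchor_edge by blast
  have fin: "finite ?A" by (simp add: finite_cube_anchors)
  have one: "one_edge_per_dir ?R ?A"
    using max I d by (intro one_edge_per_dir_cube_anchors) (auto simp: maximum_on_def)
  have "edge_dirs ?R ?A v \<noteq> {}" using \<open>j \<in> edge_dirs ?R ?A v\<close> by blast
  then obtain w1 where w1: "w1 \<in> ?A" "card (edge_dirs ?R ?A w1) = 1"
    using exists_other_leaf[OF fin one] by blast
  then have "edge_dirs ?R ?A w1 \<noteq> {}" by auto
  then obtain w2 where w2: "w2 \<in> ?A" "w2 \<noteq> w1" "card (edge_dirs ?R ?A w2) = 1"
    using exists_other_leaf[OF fin one] by blast
  have "cube w1 I \<noteq> cube w2 I" using w2(2) cube_inject by metis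
  moreover have "(I, cube w1 I) \<in> boundary n d C" "(I, cube w2 I) \<in> boundary n d C"
    using boundary_of_cube_anchor_leaf[OF d I] w1 w2(1,3) by simp_all
  ultimately show "\<exists>Q1 Q2. Q1 \<noteq> Q2 \<and> (I, Q1) \<in> boundary n d C \<and> (I, Q2) \<in> boundary n d C"
    by blast
qed

end
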